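(* Let $(x_i)_{i\in[n]}$ be i.i.d. Bernoulli random variables conditioned on the event $\sum_{i\in[n]}x_i=S$. Let $A,B_1,\dots,B_k$ partition $[n]$, and set $X=(x_i)_{i\in A}$, $Y_j=(x_i)_{i\in B_j}$, $Z_j=\sum_{i\in B_j}x_i$ for $1\le j\le k$. Let $f$ be a real-valued function and $\varphi(t)=\mathbb{E}\,e^{itf(X,Y_1,\dots,Y_k)}$. Then \[|\varphi(t)|^{2^k}\le\mathbb{E}_{Z_1,\dots,Z_k,Y_1^0,Y_1^1,\dots,Y_k^0,Y_k^1}\Big|\mathbb{E}_X\big[e^{it\alpha(f)(X,\mathbf{Y})}\,\big|\,Z_1,\dots,Z_k\big]\Big|,\] where $(Z_1,\dots,Z_k)$ has the distribution induced by the conditioned model, and given $Z_1,\dots,Z_k$ the vectors $Y_j^\ell$ ($1\le j\le k$, $\ell\in\{0,1\}$) are conditionally independent, each $Y_j^\ell$ uniform among $\{0,1\}$-vectors indexed by $B_j$ with exactly $Z_j$ ones, and the inner expectation is over $X$ with its conditional distribution given $Z_1,\dots,Z_k$.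
   Context: For $f(X,Y_1,\dots,Y_k)$, the decoupling operator $\alpha$ is $\alpha(f)(X,Y_1^0,Y_1^1,\dots,Y_k^0,Y_k^1)=\sum_{\mathbf{v}\in\{0,1\}^k}(-1)^{|\mathbf{v}|}f(X,Y_1^{v_1},\dots,Y_k^{v_k})$, and $\mathbf{Y}=(Y_1^0,Y_1^1,\dots,Y_k^0,Y_k^1)$. *)

theory Defs
  imports "HOL-Probability.Probability"
begin

text \<open>Vectors in {0,1}^n are functions nat => bool that are False outside {..<n}.\<close>

definition cond_bern :: "real \<Rightarrow> nat \<Rightarrow> nat \<Rightarrow> (nat \<Rightarrow> bool) pmf" where
  "cond_bern p n S =
     cond_pmf (Pi_pmf {..<n} False (\<lambda>_. bernoulli_pmf p)) {x. card {i\<in>{..<n}. x i} = S}"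

definition blocksum :: "(nat \<Rightarrow> nat set) \<Rightarrow> nat \<Rightarrow> (nat \<Rightarrow> bool) \<Rightarrow> nat \<Rightarrow> nat" where
  "blocksum B k x = (\<lambda>j. if j \<in> {1..k} then card {i\<in>B j. x i} else 0)"

definition unif_block :: "nat set \<Rightarrow> nat \<Rightarrow> (nat \<Rightarrow> bool) pmf" where
  "unif_block Bj m = pmf_of_set {y. (\<forall>i. i \<notin> Bj \<longrightarrow> \<not> y i) \<and> card {i\<in>Bj. y i} = m}"

definition Ydist :: "(nat \<Rightarrow> nat set) \<Rightarrow> nat \<Rightarrow> (nat \<Rightarrow> nat) \<Rightarrow> (nat \<times> bool \<Rightarrow> nat \<Rightarrow> bool) pmf" where
  "Ydist B k z = Pi_pmf ({1..k} \<times> UNIV) (\<lambda>_. False) (\<lambda>(j, l). unif_block (B j) (z j))"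

definition glue :: "nat set \<Rightarrow> (nat \<Rightarrow> nat set) \<Rightarrow> nat \<Rightarrow> (nat \<Rightarrow> bool)
    \<Rightarrow> (nat \<times> bool \<Rightarrow> nat \<Rightarrow> bool) \<Rightarrow> (nat \<Rightarrow> bool) \<Rightarrow> nat \<Rightarrow> bool" where
  "glue A B k X Y v = (\<lambda>i. if i \<in> A then X i else (\<exists>j\<in>{1..k}. i \<in> B j \<and> Y (j, v j) i))"

definition decouple :: "nat set \<Rightarrow> (nat \<Rightarrow> nat set) \<Rightarrow> nat \<Rightarrow> ((nat \<Rightarrow> bool) \<Rightarrow> real)
    \<Rightarrow> (nat \<Rightarrow> bool) \<Rightarrow> (nat \<times> bool \<Rightarrow> nat \<Rightarrow> bool) \<Rightarrow> real" where
  "decouple A B k f X Y =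
     (\<Sum>v \<in> {1..k} \<rightarrow>\<^sub>E (UNIV :: bool set).
        (-1) ^ card {j\<in>{1..k}. v j} * f (glue A B k X Y v))"

end

theory Submission
  imports Defs
begin

text \<open>
  Conditioning the i.i.d. Bernoulli vector on its sum \<open>S\<close> makes it uniform on the vectors of
  weight \<open>S\<close>. Conditioning further on the block sums \<open>Z = z\<close> makes \<open>X\<close> and the blocks
  \<open>Y\<^sub>1, ..., Y\<^sub>k\<close> independent, \<open>Y\<^sub>j\<close> being uniform among the vectors of weight \<open>z\<^sub>j\<close> on
  \<open>B\<^sub>j\<close>; so, given \<open>Z\<close>, the blocks may be replaced by fresh independent copies. By the law
  of total expectation and Jensen's inequality it suffices to bound the \<open>2\<^sup>k\<close>-th power of each
  conditional characteristic function, and this is \<open>k\<close>-fold Cauchy-Schwarz: the identity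
  \<open>|E h(c)|\<^sup>2 = E h(c\<^sub>0) cnj (h(c\<^sub>1))\<close> for independent copies \<open>c\<^sub>0, c\<^sub>1\<close> doubles one block
  into \<open>Y\<^sub>j\<^sup>0, Y\<^sub>j\<^sup>1\<close> and replaces the phase by its difference in that block. After all \<open>k\<close>
  blocks the phase is \<open>t \<alpha>(f)(X, \<^bold>Y)\<close>.
\<close>

section \<open>Expectations under finitely supported distributions\<close>

lemma integral_bind_pmf_finite:
  fixes h :: "'b \<Rightarrow> 'c::{banach, second_countable_topology}"
  assumes "finite (set_pmf p)" "\<And>a. a \<in> set_pmf p \<Longrightarrow> finite (set_pmf (f a))"
  shows "(\<integral>x. h x \<partial>bind_pmf p f) = (\<integral>a. (\<integral>x. h x \<partial>f a) \<partial>p)"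
  using assms by (simp add: pmf_expectation_bind[OF assms order_refl] integral_measure_pmf[of "set_pmf p"])

lemma integral_pair_pmf_finite:
  fixes h :: "'a \<times> 'b \<Rightarrow> 'c::{banach, second_countable_topology}"
  assumes "finite (set_pmf p)" "finite (set_pmf q)"
  shows "(\<integral>x. h x \<partial>pair_pmf p q) = (\<integral>a. (\<integral>b. h (a, b) \<partial>q) \<partial>p)"
  using assms by (simp add: pair_pmf_def integral_bind_pmf_finite)

lemma integral_swap_pmf_finite:
  fixes f :: "'a \<Rightarrow> 'b \<Rightarrow> 'c::{banach, second_countable_topology}"
  assumes "finite (set_pmf p)" "finite (set_pmf q)"
  shows "(\<integral>a. (\<integral>b. f a b \<partial>q) \<partial>p) = (\<integral>b. (\<integral>a. f a b \<partial>p) \<partial>q)"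
proof -
  have "(\<integral>a. (\<integral>b. f a b \<partial>q) \<partial>p) = (\<integral>x. case_prod f x \<partial>pair_pmf p q)"
    using assms by (simp add: integral_pair_pmf_finite)
  also have "\<dots> = (\<integral>x. case_prod (\<lambda>b a. f a b) x \<partial>pair_pmf q p)"
    by (subst pair_commute_pmf) (simp add: case_prod_unfold)
  also have "\<dots> = (\<integral>b. (\<integral>a. f a b \<partial>p) \<partial>q)"
    using assms by (simp add: integral_pair_pmf_finite)
  finally show ?thesis .
qed

lemma integral_mono_pmf_finite:
  fixes f g :: "'a \<Rightarrow> real"
  assumes "finite (set_pmf p)" "\<And>x. x \<in> set_pmf p \<Longrightarrow> f x \<le> g x"
  shows "(\<integral>x. f x \<partial>p) \<le> (\<integral>x. g x \<partial>p)"
  using assms by (intro integral_mono_AE) (auto simp: AE_measure_pmf_iff integrable_measure_pmf_finite)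

lemma square_integral_le_integral_square_pmf:
  fixes X :: "'a \<Rightarrow> real"
  assumes "finite (set_pmf p)"
  shows "(\<integral>x. X x \<partial>p)\<^sup>2 \<le> (\<integral>x. (X x)\<^sup>2 \<partial>p)"
proof -
  have "0 \<le> measure_pmf.variance p X"
    by (rule measure_pmf.variance_positive)
  also have "\<dots> = (\<integral>x. (X x)\<^sup>2 \<partial>p) - (\<integral>x. X x \<partial>p)\<^sup>2"
    using assms by (intro measure_pmf.variance_eq) (auto simp: integrable_measure_pmf_finite)
  finally show ?thesis by simp
qed

lemma power_two_pow_integral_le_pmf:
  fixes X :: "'a \<Rightarrow> real"
  assumes "finite (set_pmf p)"
  shows "(\<integral>x. X x \<partial>p) ^ 2 ^ m \<le> (\<integral>x. X x ^ 2 ^ m \<partial>p)"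
proof (induction m arbitrary: X)
  case (Suc m)
  have "(\<integral>x. X x \<partial>p) ^ 2 ^ Suc m = ((\<integral>x. X x \<partial>p)\<^sup>2) ^ 2 ^ m"
    by (simp add: power_mult[symmetric] mult.commute)
  also have "\<dots> \<le> (\<integral>x. (X x)\<^sup>2 \<partial>p) ^ 2 ^ m"
    using assms by (intro power_mono square_integral_le_integral_square_pmf) auto
  also have "\<dots> \<le> (\<integral>x. ((X x)\<^sup>2) ^ 2 ^ m \<partial>p)"
    by (rule Suc)
  also have "\<dots> = (\<integral>x. X x ^ 2 ^ Suc m \<partial>p)"
    by (simp add: power_mult[symmetric] mult.commute)
  finally show ?case .
qed simp

lemma integral_cond_pmf_total:
  fixes h :: "'a \<Rightarrow> 'c::{banach, second_countable_topology}"
  assumes "finite (set_pmf p)"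
  shows "(\<integral>x. h x \<partial>p) = (\<integral>z. (\<integral>x. h x \<partial>cond_pmf p {x. g x = z}) \<partial>map_pmf g p)"
proof -
  have "bind_pmf (map_pmf g p) (\<lambda>z. cond_pmf p {x. g x = z}) = p"
    by (rule bind_cond_pmf_cancel) (auto simp: vimage_def eq_commute)
  then have "(\<integral>x. h x \<partial>p) = (\<integral>x. h x \<partial>bind_pmf (map_pmf g p) (\<lambda>z. cond_pmf p {x. g x = z}))"
    by simp
  also have "\<dots> = (\<integral>z. (\<integral>x. h x \<partial>cond_pmf p {x. g x = z}) \<partial>map_pmf g p)"
  proof (rule integral_bind_pmf_finite)
    show "finite (set_pmf (cond_pmf p {x. g x = z}))" if "z \<in> set_pmf (map_pmf g p)" for z
      using that assms by (subst set_cond_pmf) auto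
  qed (use assms in simp)
  finally show ?thesis .
qed

lemma norm_integral_power_two_pow_le_cond_pmf:
  fixes h :: "'a \<Rightarrow> 'c::{banach, second_countable_topology}"
  assumes "finite (set_pmf p)"
  shows "norm (\<integral>x. h x \<partial>p) ^ 2 ^ k
    \<le> (\<integral>z. norm (\<integral>x. h x \<partial>cond_pmf p {x. g x = z}) ^ 2 ^ k \<partial>map_pmf g p)"
proof -
  have "norm (\<integral>x. h x \<partial>p) \<le> (\<integral>z. norm (\<integral>x. h x \<partial>cond_pmf p {x. g x = z}) \<partial>map_pmf g p)"
    unfolding integral_cond_pmf_total[OF assms, of h g] by (rule integral_norm_bound)
  then have "norm (\<integral>x. h x \<partial>p) ^ 2 ^ k
      \<le> (\<integral>z. norm (\<integral>x. h x \<partial>cond_pmf p {x. g x = z}) \<partial>map_pmf g p) ^ 2 ^ k"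
    by (intro power_mono) auto
  also have "\<dots> \<le> (\<integral>z. norm (\<integral>x. h x \<partial>cond_pmf p {x. g x = z}) ^ 2 ^ k \<partial>map_pmf g p)"
    using assms by (intro power_two_pow_integral_le_pmf) simp
  finally show ?thesis .
qed

section \<open>Decoupling by iterated Cauchy-Schwarz\<close>

lemma finite_set_pmf_Pi_pmf:
  assumes "finite A" "\<And>j. j \<in> A \<Longrightarrow> finite (set_pmf (p j))"
  shows "finite (set_pmf (Pi_pmf A d p))"
  using assms by (simp add: set_Pi_pmf finite_PiE_dflt)

lemma integral_Pi_pmf_insert:
  fixes g :: "('j \<Rightarrow> 'b) \<Rightarrow> 'c::{banach, second_countable_topology}"
  assumes "finite A" "a \<notin> A" "\<And>j. j \<in> insert a A \<Longrightarrow> finite (set_pmf (p j))"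
  shows "(\<integral>f. g f \<partial>Pi_pmf (insert a A) d p) = (\<integral>y. (\<integral>f. g (f(a := y)) \<partial>Pi_pmf A d p) \<partial>p a)"
  using assms by (simp add: Pi_pmf_insert integral_pair_pmf_finite finite_set_pmf_Pi_pmf)

lemma integral_Pi_pmf_insert_doubled:
  fixes g :: "('j \<times> bool \<Rightarrow> 'b) \<Rightarrow> 'c::{banach, second_countable_topology}"
  assumes "finite J" "a \<notin> J" "\<And>j. j \<in> insert a J \<Longrightarrow> finite (set_pmf (N j))"
  shows "(\<integral>Y. g Y \<partial>Pi_pmf (insert a J \<times> UNIV) d (\<lambda>(j, l). N j))
    = (\<integral>w. (\<integral>Y. g (Y((a, True) := snd w, (a, False) := fst w)) \<partial>Pi_pmf (J \<times> UNIV) d (\<lambda>(j, l). N j))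
        \<partial>pair_pmf (N a) (N a))"
proof -
  have split: "insert a J \<times> UNIV = insert (a, False) (insert (a, True) (J \<times> UNIV))"
    by (auto simp: UNIV_bool)
  have "(\<integral>Y. g Y \<partial>Pi_pmf (insert a J \<times> UNIV) d (\<lambda>(j, l). N j))
      = (\<integral>y0. (\<integral>Y. g (Y((a, False) := y0)) \<partial>Pi_pmf (insert (a, True) (J \<times> UNIV)) d (\<lambda>(j, l). N j)) \<partial>N a)"
    unfolding split using assms by (subst integral_Pi_pmf_insert) auto
  also have "\<dots> = (\<integral>y0. (\<integral>y1. (\<integral>Y. g (Y((a, True) := y1, (a, False) := y0))
      \<partial>Pi_pmf (J \<times> UNIV) d (\<lambda>(j, l). N j)) \<partial>N a) \<partial>N a)"
    using assms by (subst integral_Pi_pmf_insert) auto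
  also have "\<dots> = (\<integral>w. (\<integral>Y. g (Y((a, True) := snd w, (a, False) := fst w))
      \<partial>Pi_pmf (J \<times> UNIV) d (\<lambda>(j, l). N j)) \<partial>pair_pmf (N a) (N a))"
    using assms by (simp add: integral_pair_pmf_finite finite_set_pmf_Pi_pmf finite_cartesian_product)
  finally show ?thesis .
qed

definition iterated_difference :: "'j set \<Rightarrow> (('j \<Rightarrow> 'b) \<Rightarrow> real) \<Rightarrow> ('j \<times> bool \<Rightarrow> 'b) \<Rightarrow> real" where
  "iterated_difference J F Y = (\<Sum>v\<in>J \<rightarrow>\<^sub>E UNIV. (-1) ^ card {j\<in>J. v j} * F (\<lambda>j. Y (j, v j)))"

lemma iterated_difference_insert:
  assumes "finite J" "a \<notin> J"
  shows "iterated_difference (insert a J) F (Y((a, True) := y1, (a, False) := y0))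
    = iterated_difference J (\<lambda>y. F (y(a := y0)) - F (y(a := y1))) Y"
proof -
  let ?Y = "Y((a, True) := y1, (a, False) := y0)"
  have card: "card {j\<in>insert a J. (v(a := b)) j} = (if b then Suc (card {j\<in>J. v j}) else card {j\<in>J. v j})"
    for v :: "'a \<Rightarrow> bool" and b
  proof -
    have "{j\<in>insert a J. (v(a := b)) j} = (if b then insert a {j\<in>J. v j} else {j\<in>J. v j})"
      using assms(2) by auto
    then show ?thesis using assms by simp
  qed
  have upd: "(\<lambda>j. ?Y (j, (v(a := b)) j)) = (\<lambda>j. Y (j, v j))(a := (if b then y1 else y0))"
    if "v \<in> J \<rightarrow>\<^sub>E UNIV" for v b
    using assms(2) by (auto simp: fun_eq_iff)
  have "iterated_difference (insert a J) F ?Y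
      = (\<Sum>(b, v)\<in>UNIV \<times> (J \<rightarrow>\<^sub>E UNIV). (-1) ^ card {j\<in>insert a J. (v(a := b)) j}
          * F (\<lambda>j. ?Y (j, (v(a := b)) j)))"
  proof -
    have "(\<Sum>v\<in>insert a J \<rightarrow>\<^sub>E UNIV. G v) = (\<Sum>(b, v)\<in>UNIV \<times> (J \<rightarrow>\<^sub>E UNIV). G (v(a := b)))"
      for G :: "('a \<Rightarrow> bool) \<Rightarrow> real"
      unfolding PiE_insert_eq by (subst sum.reindex[OF inj_combinator[OF assms(2)]]) (simp add: case_prod_unfold)
    then show ?thesis unfolding iterated_difference_def .
  qed
  also have "\<dots> = (\<Sum>v\<in>J \<rightarrow>\<^sub>E UNIV. \<Sum>b\<in>UNIV. (-1) ^ card {j\<in>insert a J. (v(a := b)) j}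
          * F (\<lambda>j. ?Y (j, (v(a := b)) j)))"
    by (simp only: sum.cartesian_product[symmetric] sum.swap[of _ UNIV])
  also have "\<dots> = (\<Sum>v\<in>J \<rightarrow>\<^sub>E UNIV. (-1) ^ card {j\<in>J. v j} * F ((\<lambda>j. Y (j, v j))(a := y0))
      - (-1) ^ card {j\<in>J. v j} * F ((\<lambda>j. Y (j, v j))(a := y1)))"
  proof (rule sum.cong[OF refl])
    fix v :: "'a \<Rightarrow> bool" assume v: "v \<in> J \<rightarrow>\<^sub>E UNIV"
    show "(\<Sum>b\<in>UNIV. (-1) ^ card {j\<in>insert a J. (v(a := b)) j} * F (\<lambda>j. ?Y (j, (v(a := b)) j)))
      = (-1) ^ card {j\<in>J. v j} * F ((\<lambda>j. Y (j, v j))(a := y0))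
        - (-1) ^ card {j\<in>J. v j} * F ((\<lambda>j. Y (j, v j))(a := y1))"
      unfolding UNIV_bool card upd[OF v] by simp
  qed
  also have "\<dots> = iterated_difference J (\<lambda>y. F (y(a := y0)) - F (y(a := y1))) Y"
    by (simp add: iterated_difference_def algebra_simps)
  finally show ?thesis .
qed

lemma decoupling_step:
  fixes G :: "'a \<Rightarrow> 'b \<Rightarrow> real"
  assumes M: "finite (set_pmf M)" and Q: "finite (set_pmf Q)"
  shows "(cmod (\<integral>x. (\<integral>c. cis (G x c) \<partial>Q) \<partial>M))\<^sup>2
    \<le> (\<integral>w. cmod (\<integral>x. cis (G x (fst w) - G x (snd w)) \<partial>M) \<partial>pair_pmf Q Q)"
proof -
  define H where "H x = (\<integral>c. cis (G x c) \<partial>Q)" for x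
  have norm_H_sq: "complex_of_real ((cmod (H x))\<^sup>2)
      = (\<integral>w. cis (G x (fst w) - G x (snd w)) \<partial>pair_pmf Q Q)" for x
  proof -
    have "complex_of_real ((cmod (H x))\<^sup>2) = H x * cnj (H x)"
      by (rule complex_norm_square)
    also have "\<dots> = (\<integral>c0. (\<integral>c1. cis (G x c0) * cnj (cis (G x c1)) \<partial>Q) \<partial>Q)"
      unfolding H_def using Q by (simp add: integrable_measure_pmf_finite)
    also have "\<dots> = (\<integral>w. cis (G x (fst w) - G x (snd w)) \<partial>pair_pmf Q Q)"
      using Q by (simp add: integral_pair_pmf_finite cis_cnj cis_mult)
    finally show ?thesis .
  qed
  have "(cmod (\<integral>x. H x \<partial>M))\<^sup>2 \<le> (\<integral>x. cmod (H x) \<partial>M)\<^sup>2"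
    by (intro power_mono integral_norm_bound) auto
  also have "\<dots> \<le> (\<integral>x. (cmod (H x))\<^sup>2 \<partial>M)"
    using M by (rule square_integral_le_integral_square_pmf)
  also have "\<dots> = cmod (complex_of_real (\<integral>x. (cmod (H x))\<^sup>2 \<partial>M))"
    by (simp add: integral_nonneg_AE)
  also have "\<dots> = cmod (\<integral>x. complex_of_real ((cmod (H x))\<^sup>2) \<partial>M)"
    by (simp only: integral_complex_of_real)
  also have "\<dots> = cmod (\<integral>x. (\<integral>w. cis (G x (fst w) - G x (snd w)) \<partial>pair_pmf Q Q) \<partial>M)"
    by (simp only: norm_H_sq)
  also have "\<dots> = cmod (\<integral>w. (\<integral>x. cis (G x (fst w) - G x (snd w)) \<partial>M) \<partial>pair_pmf Q Q)"
    using Q by (subst integral_swap_pmf_finite[OF M]) auto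
  also have "\<dots> \<le> (\<integral>w. cmod (\<integral>x. cis (G x (fst w) - G x (snd w)) \<partial>M) \<partial>pair_pmf Q Q)"
    by (rule integral_norm_bound)
  finally show ?thesis
    unfolding H_def .
qed

lemma decoupling_step_Pi_pmf:
  fixes M :: "'a pmf" and N :: "'j \<Rightarrow> 'b pmf" and F :: "'a \<Rightarrow> ('j \<Rightarrow> 'b) \<Rightarrow> real"
  assumes "finite J" "a \<notin> J" "finite (set_pmf M)" "\<And>j. j \<in> insert a J \<Longrightarrow> finite (set_pmf (N j))"
  shows "(cmod (\<integral>x. (\<integral>y. cis (F x y) \<partial>Pi_pmf (insert a J) d N) \<partial>M))\<^sup>2
    \<le> (\<integral>w. cmod (\<integral>x. (\<integral>y. cis (F x (y(a := fst w)) - F x (y(a := snd w))) \<partial>Pi_pmf J d N) \<partial>M)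
        \<partial>pair_pmf (N a) (N a))"
proof -
  let ?P = "Pi_pmf J d N"
  have fin_Na: "finite (set_pmf (N a))" and fin_P: "finite (set_pmf ?P)"
    using assms by (auto intro!: finite_set_pmf_Pi_pmf)
  have inner: "(\<integral>y. cis (F x y) \<partial>Pi_pmf (insert a J) d N)
      = (\<integral>y. (\<integral>c. cis (F x (y(a := c))) \<partial>N a) \<partial>?P)" for x
  proof -
    have "(\<integral>y. cis (F x y) \<partial>Pi_pmf (insert a J) d N) = (\<integral>c. (\<integral>y. cis (F x (y(a := c))) \<partial>?P) \<partial>N a)"
      using assms by (intro integral_Pi_pmf_insert) auto
    also have "\<dots> = (\<integral>y. (\<integral>c. cis (F x (y(a := c))) \<partial>N a) \<partial>?P)"
      by (rule integral_swap_pmf_finite[OF fin_Na fin_P])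
    finally show ?thesis .
  qed
  have "(cmod (\<integral>x. (\<integral>y. cis (F x y) \<partial>Pi_pmf (insert a J) d N) \<partial>M))\<^sup>2
      = (cmod (\<integral>u. (\<integral>c. cis (F (fst u) ((snd u)(a := c))) \<partial>N a) \<partial>pair_pmf M ?P))\<^sup>2"
    by (simp only: inner integral_pair_pmf_finite[OF assms(3) fin_P] fst_conv snd_conv)
  also have "\<dots> \<le> (\<integral>w. cmod (\<integral>x. (\<integral>y. cis (F x (y(a := fst w)) - F x (y(a := snd w))) \<partial>?P) \<partial>M)
      \<partial>pair_pmf (N a) (N a))"
    using decoupling_step[of "pair_pmf M ?P" "N a" "\<lambda>u c. F (fst u) ((snd u)(a := c))"]
    using assms(3) fin_P fin_Na by (simp add: integral_pair_pmf_finite)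
  finally show ?thesis .
qed

lemma decoupling_inequality:
  fixes M :: "'a pmf" and N :: "'j \<Rightarrow> 'b pmf" and F :: "'a \<Rightarrow> ('j \<Rightarrow> 'b) \<Rightarrow> real"
  assumes "finite J" "finite (set_pmf M)" "\<And>j. j \<in> J \<Longrightarrow> finite (set_pmf (N j))"
  shows "cmod (\<integral>x. (\<integral>y. cis (F x y) \<partial>Pi_pmf J d N) \<partial>M) ^ 2 ^ card J
    \<le> (\<integral>Y. cmod (\<integral>x. cis (iterated_difference J (F x) Y) \<partial>M) \<partial>Pi_pmf (J \<times> UNIV) d (\<lambda>(j, l). N j))"
  using assms(1,3)
proof (induction J arbitrary: F rule: finite_induct)
  case empty
  then show ?case
    by (simp add: iterated_difference_def)
next
  case (insert a J)
  let ?W = "pair_pmf (N a) (N a)"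
  let ?L = "\<integral>x. (\<integral>y. cis (F x y) \<partial>Pi_pmf (insert a J) d N) \<partial>M"
  define F' where "F' w x = (\<lambda>y. F x (y(a := fst w)) - F x (y(a := snd w)))" for w x
  define \<Phi> where "\<Phi> w = (\<integral>x. (\<integral>y. cis (F' w x y) \<partial>Pi_pmf J d N) \<partial>M)" for w
  have fin_W: "finite (set_pmf ?W)"
    using insert.prems by simp
  have "cmod ?L ^ 2 ^ card (insert a J) = ((cmod ?L)\<^sup>2) ^ 2 ^ card J"
    using insert by (simp add: power_mult[symmetric] mult.commute)
  also have "\<dots> \<le> (\<integral>w. cmod (\<Phi> w) \<partial>?W) ^ 2 ^ card J"
    using decoupling_step_Pi_pmf[OF insert(1,2) assms(2) insert.prems, where F = F]
    by (intro power_mono) (auto simp: \<Phi>_def F'_def)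
  also have "\<dots> \<le> (\<integral>w. cmod (\<Phi> w) ^ 2 ^ card J \<partial>?W)"
    using fin_W by (rule power_two_pow_integral_le_pmf)
  also have "\<dots> \<le> (\<integral>w. (\<integral>Y. cmod (\<integral>x. cis (iterated_difference J (F' w x) Y) \<partial>M)
      \<partial>Pi_pmf (J \<times> UNIV) d (\<lambda>(j, l). N j)) \<partial>?W)"
    using fin_W insert by (intro integral_mono_pmf_finite) (auto simp: \<Phi>_def)
  also have "\<dots> = (\<integral>Y. cmod (\<integral>x. cis (iterated_difference (insert a J) (F x) Y) \<partial>M)
      \<partial>Pi_pmf (insert a J \<times> UNIV) d (\<lambda>(j, l). N j))"
    using insert by (subst integral_Pi_pmf_insert_doubled) (auto simp: iterated_difference_insert F'_def)
  finally show ?case .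
qed

section \<open>Uniform distributions on vectors of fixed weight\<close>

definition weight_vectors :: "'a set \<Rightarrow> nat \<Rightarrow> ('a \<Rightarrow> bool) set" where
  "weight_vectors I m = {y. (\<forall>i. i \<notin> I \<longrightarrow> \<not> y i) \<and> card {i\<in>I. y i} = m}"

lemma unif_block_eq_pmf_of_set: "unif_block I m = pmf_of_set (weight_vectors I m)"
  by (simp add: unif_block_def weight_vectors_def)

lemma finite_weight_vectors:
  assumes "finite I"
  shows "finite (weight_vectors I m)"
proof (rule finite_subset)
  show "weight_vectors I m \<subseteq> PiE_dflt I False (\<lambda>_. UNIV)"
    by (auto simp: weight_vectors_def PiE_dflt_def)
qed (use assms in auto)

lemma weight_vectors_nonempty:
  assumes "finite I" "m \<le> card I"
  shows "weight_vectors I m \<noteq> {}"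
proof -
  obtain T where "T \<subseteq> I" "card T = m"
    using obtain_subset_with_card_n[OF assms(2)] by blast
  moreover from \<open>T \<subseteq> I\<close> have "{i\<in>I. i \<in> T} = T"
    by auto
  ultimately have "(\<lambda>i. i \<in> T) \<in> weight_vectors I m"
    by (auto simp: weight_vectors_def)
  then show ?thesis
    by blast
qed

lemma set_pmf_unif_block:
  assumes "finite I" "weight_vectors I m \<noteq> {}"
  shows "set_pmf (unif_block I m) = weight_vectors I m"
  using assms by (simp add: unif_block_eq_pmf_of_set finite_weight_vectors)

lemma cond_pmf_eq_pmf_of_set:
  assumes fin: "finite (set_pmf p \<inter> C)" and ne: "set_pmf p \<inter> C \<noteq> {}"
    and const: "\<And>x y. x \<in> set_pmf p \<inter> C \<Longrightarrow> y \<in> set_pmf p \<inter> C \<Longrightarrow> pmf p x = pmf p y"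
  shows "cond_pmf p C = pmf_of_set (set_pmf p \<inter> C)"
proof (rule pmf_eqI)
  fix x
  show "pmf (cond_pmf p C) x = pmf (pmf_of_set (set_pmf p \<inter> C)) x"
  proof (cases "x \<in> set_pmf p \<inter> C")
    case True
    have "measure_pmf.prob p C = measure_pmf.prob p (set_pmf p \<inter> C)"
      by (simp add: measure_Int_set_pmf Int_commute)
    also have "\<dots> = (\<Sum>y\<in>set_pmf p \<inter> C. pmf p y)"
      using fin by (rule measure_measure_pmf_finite)
    also have "\<dots> = real (card (set_pmf p \<inter> C)) * pmf p x"
      using const[OF _ True] by simp
    moreover have "pmf p x \<noteq> 0"
      using True by (simp add: set_pmf_iff)
    ultimately show ?thesis
      using True fin ne by (simp add: pmf_cond[OF ne])
  next
    case False
    then show ?thesis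
      using fin ne by (auto simp: pmf_cond[OF ne] pmf_eq_0_set_pmf)
  qed
qed

lemma cond_pmf_of_set:
  assumes "finite W" "W \<inter> C \<noteq> {}"
  shows "cond_pmf (pmf_of_set W) C = pmf_of_set (W \<inter> C)"
proof -
  have "W \<noteq> {}"
    using assms(2) by blast
  then show ?thesis
    using assms cond_pmf_eq_pmf_of_set[of "pmf_of_set W" C] by simp
qed

lemma pmf_of_set_Times:
  assumes "finite X" "X \<noteq> {}" "finite Y" "Y \<noteq> {}"
  shows "pmf_of_set (X \<times> Y) = pair_pmf (pmf_of_set X) (pmf_of_set Y)"
proof (rule pmf_eqI)
  fix u :: "'a \<times> 'b"
  show "pmf (pmf_of_set (X \<times> Y)) u = pmf (pair_pmf (pmf_of_set X) (pmf_of_set Y)) u"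
    using assms by (cases u) (simp add: pmf_pair card_cartesian_product indicator_def)
qed

lemma pmf_Pi_bernoulli:
  assumes "finite I" "\<forall>i. i \<notin> I \<longrightarrow> \<not> x i" "0 \<le> p" "p \<le> 1"
  shows "pmf (Pi_pmf I False (\<lambda>_. bernoulli_pmf p)) x
    = p ^ card {i\<in>I. x i} * (1 - p) ^ (card I - card {i\<in>I. x i})"
proof -
  have "pmf (Pi_pmf I False (\<lambda>_. bernoulli_pmf p)) x = (\<Prod>i\<in>I. if x i then p else 1 - p)"
    using assms by (subst pmf_Pi') (auto intro!: prod.cong)
  also have "\<dots> = p ^ card (I \<inter> {i. x i}) * (1 - p) ^ card (I \<inter> - {i. x i})"
    using assms(1) by (simp add: prod.If_cases)
  also have "I \<inter> {i. x i} = {i\<in>I. x i}"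
    by auto
  also have "I \<inter> - {i. x i} = I - {i\<in>I. x i}"
    by auto
  also have "card (I - {i\<in>I. x i}) = card I - card {i\<in>I. x i}"
    using assms(1) by (intro card_Diff_subset) auto
  finally show ?thesis .
qed

lemma cond_bern_eq_unif_block:
  assumes "0 < p" "p < 1" "S \<le> n"
  shows "cond_bern p n S = unif_block {..<n} S"
proof -
  let ?P = "Pi_pmf {..<n} False (\<lambda>_. bernoulli_pmf p)"
  have support: "set_pmf ?P \<inter> {x. card {i\<in>{..<n}. x i} = S} = weight_vectors {..<n} S"
    using assms by (auto simp: set_Pi_pmf PiE_dflt_def weight_vectors_def)
  have "cond_pmf ?P {x. card {i\<in>{..<n}. x i} = S} = pmf_of_set (weight_vectors {..<n} S)"
    unfolding support[symmetric]
  proof (rule cond_pmf_eq_pmf_of_set)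
    show "finite (set_pmf ?P \<inter> {x. card {i\<in>{..<n}. x i} = S})"
      unfolding support by (simp add: finite_weight_vectors)
    show "set_pmf ?P \<inter> {x. card {i\<in>{..<n}. x i} = S} \<noteq> {}"
      unfolding support using assms by (simp add: weight_vectors_nonempty)
    show "pmf ?P x = pmf ?P y" if "x \<in> set_pmf ?P \<inter> {x. card {i\<in>{..<n}. x i} = S}"
      and "y \<in> set_pmf ?P \<inter> {x. card {i\<in>{..<n}. x i} = S}" for x y
      using that assms unfolding support by (simp add: pmf_Pi_bernoulli weight_vectors_def)
  qed
  then show ?thesis
    by (simp add: cond_bern_def unif_block_eq_pmf_of_set)
qed

section \<open>Conditioning on the block sums\<close>

definition splice :: "'a set \<Rightarrow> (nat \<Rightarrow> 'a set) \<Rightarrow> nat \<Rightarrow> ('a \<Rightarrow> bool) \<Rightarrow> (nat \<Rightarrow> 'a \<Rightarrow> bool) \<Rightarrow> 'a \<Rightarrow> bool" where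
  "splice A B k x y = (\<lambda>i. if i \<in> A then x i else (\<exists>j\<in>{1..k}. i \<in> B j \<and> y j i))"

lemma splice_splice [simp]: "splice A B k (splice A B k x y) y' = splice A B k x y'"
  by (simp add: splice_def)

lemma glue_eq_splice: "glue A B k x Y v = splice A B k x (\<lambda>j. Y (j, v j))"
  by (simp add: glue_def splice_def)

lemma decouple_eq_iterated_difference:
  "c * decouple A B k f x Y = iterated_difference {1..k} (\<lambda>y. c * f (splice A B k x y)) Y"
  by (simp add: decouple_def iterated_difference_def glue_eq_splice sum_distrib_left algebra_simps)

text \<open>Re-splicing discards the previous blocks, so drawing fresh blocks leaves the law unchanged.\<close>

lemma integral_splice_resample:
  fixes g :: "('a \<Rightarrow> bool) \<Rightarrow> 'c::{banach, second_countable_topology}"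
  assumes "finite (set_pmf X)" "finite (set_pmf Y)"
  shows "(\<integral>x. g x \<partial>map_pmf (\<lambda>(x, y). splice A B k x y) (pair_pmf X Y))
    = (\<integral>x. (\<integral>y. g (splice A B k x y) \<partial>Y) \<partial>map_pmf (\<lambda>(x, y). splice A B k x y) (pair_pmf X Y))"
  using assms by (simp add: integral_pair_pmf_finite)

locale block_partition =
  fixes n k :: nat and A :: "nat set" and B :: "nat \<Rightarrow> nat set"
  assumes cover: "A \<union> (\<Union>j\<in>{1..k}. B j) = {..<n}"
    and disjoint_A: "\<forall>j\<in>{1..k}. A \<inter> B j = {}"
    and disjoint_B: "\<forall>j\<in>{1..k}. \<forall>j'\<in>{1..k}. j \<noteq> j' \<longrightarrow> B j \<inter> B j' = {}"
begin

lemma finite_A: "finite A"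
proof (rule finite_subset)
  show "A \<subseteq> {..<n}"
    using cover by blast
qed simp

lemma finite_B:
  assumes "j \<in> {1..k}"
  shows "finite (B j)"
proof (rule finite_subset)
  show "B j \<subseteq> {..<n}"
    using cover assms by blast
qed simp

lemma splice_A: "{i\<in>A. splice A B k x y i} = {i\<in>A. x i}"
  by (auto simp: splice_def)

lemma splice_B:
  assumes "j \<in> {1..k}"
  shows "{i\<in>B j. splice A B k x y i} = {i\<in>B j. y j i}"
proof -
  have not_A: "i \<notin> A" if "i \<in> B j" for i
    using disjoint_A assms that by blast
  have unique: "j' = j" if "j' \<in> {1..k}" "i \<in> B j'" "i \<in> B j" for i j'
    using disjoint_B assms that by blast
  have "(\<exists>j'\<in>{1..k}. i \<in> B j' \<and> y j' i) \<longleftrightarrow> y j i" if "i \<in> B j" for i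
    using unique[OF _ _ that] assms that by blast
  then show ?thesis
    by (auto simp: splice_def not_A)
qed

lemma card_split: "card {i\<in>{..<n}. u i} = card {i\<in>A. u i} + (\<Sum>j\<in>{1..k}. card {i\<in>B j. u i})"
proof -
  have "{i\<in>{..<n}. u i} = {i\<in>A. u i} \<union> (\<Union>j\<in>{1..k}. {i\<in>B j. u i})"
    using cover by auto
  moreover have "card ({i\<in>A. u i} \<union> (\<Union>j\<in>{1..k}. {i\<in>B j. u i}))
      = card {i\<in>A. u i} + card (\<Union>j\<in>{1..k}. {i\<in>B j. u i})"
    using finite_A finite_B disjoint_A by (intro card_Un_disjoint) auto
  moreover have "card (\<Union>j\<in>{1..k}. {i\<in>B j. u i}) = (\<Sum>j\<in>{1..k}. card {i\<in>B j. u i})"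
    using finite_B disjoint_B by (intro card_UN_disjoint) auto
  ultimately show ?thesis
    by simp
qed

lemma splice_in_weight_vectors:
  assumes z: "\<forall>j. j \<notin> {1..k} \<longrightarrow> z j = 0"
    and x: "x \<in> weight_vectors A m"
    and y: "y \<in> PiE_dflt {1..k} (\<lambda>_. False) (\<lambda>j. weight_vectors (B j) (z j))"
  shows "splice A B k x y \<in> weight_vectors {..<n} (m + (\<Sum>j\<in>{1..k}. z j)) \<inter> {w. blocksum B k w = z}"
proof -
  have blocks: "card {i\<in>B j. splice A B k x y i} = z j" if "j \<in> {1..k}" for j
    using y that by (auto simp: splice_B PiE_dflt_def weight_vectors_def)
  then have "(\<Sum>j\<in>{1..k}. card {i\<in>B j. splice A B k x y i}) = (\<Sum>j\<in>{1..k}. z j)"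
    by (intro sum.cong) auto
  then have "card {i\<in>{..<n}. splice A B k x y i} = m + (\<Sum>j\<in>{1..k}. z j)"
    using x unfolding card_split splice_A by (simp add: weight_vectors_def)
  moreover have "\<not> splice A B k x y i" if "i \<notin> {..<n}" for i
    using that cover by (auto simp: splice_def)
  moreover have "blocksum B k (splice A B k x y) = z"
    using blocks z by (auto simp: blocksum_def)
  ultimately show ?thesis
    by (simp add: weight_vectors_def)
qed

lemma masks_in_weight_vectors:
  assumes "w \<in> weight_vectors {..<n} (m + (\<Sum>j\<in>{1..k}. z j)) \<inter> {w. blocksum B k w = z}"
  shows "(\<lambda>i. i \<in> A \<and> w i) \<in> weight_vectors A m"
    and "(\<lambda>j. if j \<in> {1..k} then (\<lambda>i. i \<in> B j \<and> w i) else (\<lambda>_. False))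
      \<in> PiE_dflt {1..k} (\<lambda>_. False) (\<lambda>j. weight_vectors (B j) (z j))"
proof -
  have z_w: "card {i\<in>B j. w i} = z j" if "j \<in> {1..k}" for j
    using assms that by (auto simp: blocksum_def)
  then have "(\<Sum>j\<in>{1..k}. card {i\<in>B j. w i}) = (\<Sum>j\<in>{1..k}. z j)"
    by (intro sum.cong) auto
  then show "(\<lambda>i. i \<in> A \<and> w i) \<in> weight_vectors A m"
    using assms card_split[of w] by (simp add: weight_vectors_def)
  show "(\<lambda>j. if j \<in> {1..k} then (\<lambda>i. i \<in> B j \<and> w i) else (\<lambda>_. False))
      \<in> PiE_dflt {1..k} (\<lambda>_. False) (\<lambda>j. weight_vectors (B j) (z j))"
    using z_w by (auto simp: weight_vectors_def PiE_dflt_def)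
qed

lemma bij_betw_splice:
  assumes z: "\<forall>j. j \<notin> {1..k} \<longrightarrow> z j = 0"
  shows "bij_betw (\<lambda>(x, y). splice A B k x y)
    (weight_vectors A m \<times> PiE_dflt {1..k} (\<lambda>_. False) (\<lambda>j. weight_vectors (B j) (z j)))
    (weight_vectors {..<n} (m + (\<Sum>j\<in>{1..k}. z j)) \<inter> {w. blocksum B k w = z})"
    (is "bij_betw _ (?X \<times> ?Y) ?W")
proof -
  define unsplice where "unsplice w =
    (\<lambda>i. i \<in> A \<and> w i, \<lambda>j. if j \<in> {1..k} then (\<lambda>i. i \<in> B j \<and> w i) else (\<lambda>_. False))" for w
  have unsplice_splice: "unsplice (splice A B k x y) = (x, y)" if "x \<in> ?X" "y \<in> ?Y" for x y
  proof -
    have "(\<lambda>i. i \<in> A \<and> splice A B k x y i) = x"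
      using that(1) by (auto simp: splice_def weight_vectors_def)
    moreover have "(\<lambda>i. i \<in> B j \<and> splice A B k x y i) = y j" if "j \<in> {1..k}" for j
      using splice_B[OF that, of x y] \<open>y \<in> ?Y\<close> that by (auto simp: PiE_dflt_def weight_vectors_def)
    ultimately show ?thesis
      using that(2) by (auto simp: unsplice_def PiE_dflt_def)
  qed
  have splice_unsplice: "case_prod (splice A B k) (unsplice w) = w" if "w \<in> ?W" for w
  proof -
    have covered: "i \<in> A \<or> (\<exists>j\<in>{1..k}. i \<in> B j)" if "w i" for i
      using \<open>w \<in> ?W\<close> that cover by (auto simp: weight_vectors_def)
    have "splice A B k (\<lambda>i. i \<in> A \<and> w i)
        (\<lambda>j. if j \<in> {1..k} then (\<lambda>i. i \<in> B j \<and> w i) else (\<lambda>_. False)) i = w i" for i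
      using covered[of i] by (cases "i \<in> A") (auto simp: splice_def)
    then show ?thesis
      by (simp add: unsplice_def fun_eq_iff)
  qed
  show ?thesis
  proof (rule bij_betw_byWitness[where f' = unsplice])
    show "\<forall>a\<in>?X \<times> ?Y. unsplice (case_prod (splice A B k) a) = a"
      using unsplice_splice by auto
    show "\<forall>w\<in>?W. case_prod (splice A B k) (unsplice w) = w"
      using splice_unsplice by blast
    show "case_prod (splice A B k) ` (?X \<times> ?Y) \<subseteq> ?W"
      using splice_in_weight_vectors[OF z] by auto
    show "unsplice ` ?W \<subseteq> ?X \<times> ?Y"
      using masks_in_weight_vectors by (auto simp: unsplice_def)
  qed
qed

lemma blocksum_support:
  assumes "S \<le> n" "z \<in> set_pmf (map_pmf (blocksum B k) (unif_block {..<n} S))"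
  obtains m where "S = m + (\<Sum>j\<in>{1..k}. z j)" "\<forall>j. j \<notin> {1..k} \<longrightarrow> z j = 0"
    "weight_vectors A m \<noteq> {}" "\<And>j. j \<in> {1..k} \<Longrightarrow> weight_vectors (B j) (z j) \<noteq> {}"
proof -
  have "set_pmf (unif_block {..<n} S) = weight_vectors {..<n} S"
    using assms(1) by (simp add: set_pmf_unif_block weight_vectors_nonempty)
  then obtain w where w: "w \<in> weight_vectors {..<n} S" and z: "z = blocksum B k w"
    using assms(2) by auto
  have blocks: "card {i\<in>B j. w i} = z j" if "j \<in> {1..k}" for j
    using that by (simp add: z blocksum_def)
  show ?thesis
  proof (rule that)
    show "S = card {i\<in>A. w i} + (\<Sum>j\<in>{1..k}. z j)"
      using w blocks card_split[of w] by (simp add: weight_vectors_def)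
    show "\<forall>j. j \<notin> {1..k} \<longrightarrow> z j = 0"
      by (simp add: z blocksum_def)
    have "(\<lambda>i. i \<in> A \<and> w i) \<in> weight_vectors A (card {i\<in>A. w i})"
      by (simp add: weight_vectors_def)
    then show "weight_vectors A (card {i\<in>A. w i}) \<noteq> {}"
      by blast
    fix j
    assume "j \<in> {1..k}"
    then have "(\<lambda>i. i \<in> B j \<and> w i) \<in> weight_vectors (B j) (z j)"
      using blocks by (simp add: weight_vectors_def)
    then show "weight_vectors (B j) (z j) \<noteq> {}"
      by blast
  qed
qed

lemma cond_unif_block_blocksum:
  assumes "\<forall>j. j \<notin> {1..k} \<longrightarrow> z j = 0"
    and "weight_vectors A m \<noteq> {}" "\<And>j. j \<in> {1..k} \<Longrightarrow> weight_vectors (B j) (z j) \<noteq> {}"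
  shows "cond_pmf (unif_block {..<n} (m + (\<Sum>j\<in>{1..k}. z j))) {w. blocksum B k w = z}
    = map_pmf (\<lambda>(x, y). splice A B k x y)
        (pair_pmf (unif_block A m) (Pi_pmf {1..k} (\<lambda>_. False) (\<lambda>j. unif_block (B j) (z j))))"
proof -
  let ?X = "weight_vectors A m" and ?Y = "PiE_dflt {1..k} (\<lambda>_. False) (\<lambda>j. weight_vectors (B j) (z j))"
  let ?W = "weight_vectors {..<n} (m + (\<Sum>j\<in>{1..k}. z j))"
  have bij: "bij_betw (\<lambda>(x, y). splice A B k x y) (?X \<times> ?Y) (?W \<inter> {w. blocksum B k w = z})"
    using assms(1) by (rule bij_betw_splice)
  have fin_X: "finite ?X" and fin_Y: "finite ?Y"
    using finite_A finite_B by (auto simp: finite_weight_vectors)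
  have ne_Y: "?Y \<noteq> {}"
    using assms(3) by simp
  have "cond_pmf (unif_block {..<n} (m + (\<Sum>j\<in>{1..k}. z j))) {w. blocksum B k w = z}
      = pmf_of_set (?W \<inter> {w. blocksum B k w = z})"
    unfolding unif_block_eq_pmf_of_set
    using bij assms(2) ne_Y by (intro cond_pmf_of_set) (auto simp: finite_weight_vectors bij_betw_def)
  also have "\<dots> = map_pmf (\<lambda>(x, y). splice A B k x y) (pmf_of_set (?X \<times> ?Y))"
    using bij fin_X fin_Y assms(2) ne_Y by (simp add: bij_betw_def map_pmf_of_set_inj)
  also have "pmf_of_set (?X \<times> ?Y) = pair_pmf (pmf_of_set ?X) (pmf_of_set ?Y)"
    using fin_X assms(2) fin_Y ne_Y by (rule pmf_of_set_Times)
  also have "pmf_of_set ?Y = Pi_pmf {1..k} (\<lambda>_. False) (\<lambda>j. unif_block (B j) (z j))"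
    unfolding unif_block_eq_pmf_of_set
    using assms(3) finite_B by (intro Pi_pmf_of_set[symmetric]) (auto simp: finite_weight_vectors)
  also have "pmf_of_set ?X = unif_block A m"
    by (simp add: unif_block_eq_pmf_of_set)
  finally show ?thesis .
qed

lemma cond_char_power_le:
  assumes "S \<le> n" "z \<in> set_pmf (map_pmf (blocksum B k) (unif_block {..<n} S))"
  shows "cmod (\<integral>x. cis (t * f x) \<partial>cond_pmf (unif_block {..<n} S) {x. blocksum B k x = z}) ^ 2 ^ k
    \<le> (\<integral>Y. cmod (\<integral>x. cis (t * decouple A B k f x Y)
          \<partial>cond_pmf (unif_block {..<n} S) {x. blocksum B k x = z}) \<partial>Ydist B k z)"
proof -
  obtain m where S: "S = m + (\<Sum>j\<in>{1..k}. z j)" and z: "\<forall>j. j \<notin> {1..k} \<longrightarrow> z j = 0"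
    and ne_X: "weight_vectors A m \<noteq> {}" and ne_N: "\<And>j. j \<in> {1..k} \<Longrightarrow> weight_vectors (B j) (z j) \<noteq> {}"
    using blocksum_support[OF assms] by blast
  let ?N = "\<lambda>j. unif_block (B j) (z j)"
  let ?Y = "Pi_pmf {1..k} (\<lambda>_. False) ?N"
  let ?M = "cond_pmf (unif_block {..<n} S) {x. blocksum B k x = z}"
  have M: "?M = map_pmf (\<lambda>(x, y). splice A B k x y) (pair_pmf (unif_block A m) ?Y)"
    unfolding S using z ne_X ne_N by (rule cond_unif_block_blocksum)
  have fin_N: "finite (set_pmf (?N j))" if "j \<in> {1..k}" for j
    using that ne_N finite_B by (simp add: set_pmf_unif_block finite_weight_vectors)
  have fin_X: "finite (set_pmf (unif_block A m))"
    using ne_X finite_A by (simp add: set_pmf_unif_block finite_weight_vectors)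
  have fin_Y: "finite (set_pmf ?Y)"
    using fin_N by (intro finite_set_pmf_Pi_pmf) auto
  have fin_M: "finite (set_pmf ?M)"
    unfolding M using fin_X fin_Y by simp
  have "(\<integral>x. cis (t * f x) \<partial>?M) = (\<integral>x. (\<integral>y. cis (t * f (splice A B k x y)) \<partial>?Y) \<partial>?M)"
    unfolding M using fin_X fin_Y by (rule integral_splice_resample)
  moreover have "cmod (\<integral>x. (\<integral>y. cis (t * f (splice A B k x y)) \<partial>?Y) \<partial>?M) ^ 2 ^ card {1..k}
      \<le> (\<integral>Y. cmod (\<integral>x. cis (iterated_difference {1..k} (\<lambda>y. t * f (splice A B k x y)) Y) \<partial>?M)
          \<partial>Pi_pmf ({1..k} \<times> UNIV) (\<lambda>_. False) (\<lambda>(j, l). ?N j))"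
    using fin_M fin_N by (intro decoupling_inequality) auto
  ultimately show ?thesis
    by (simp add: decouple_eq_iterated_difference Ydist_def)
qed

end

theorem lemma2p11:
  fixes p t :: real and n S k :: nat
    and A :: "nat set" and B :: "nat \<Rightarrow> nat set"
    and f :: "(nat \<Rightarrow> bool) \<Rightarrow> real"
  assumes p: "0 < p" "p < 1"
    and S: "S \<le> n"
    and cover: "A \<union> (\<Union>j\<in>{1..k}. B j) = {..<n}"
    and disjA: "\<forall>j\<in>{1..k}. A \<inter> B j = {}"
    and disjB: "\<forall>j\<in>{1..k}. \<forall>j'\<in>{1..k}. j \<noteq> j' \<longrightarrow> B j \<inter> B j' = {}"
  shows "cmod (\<integral>x. exp (\<i> * complex_of_real (t * f x)) \<partial>measure_pmf (cond_bern p n S)) ^ (2 ^ k)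
    \<le> (\<integral>z. (\<integral>Y.
          cmod (\<integral>x. exp (\<i> * complex_of_real (t * decouple A B k f x Y))
                  \<partial>measure_pmf (cond_pmf (cond_bern p n S) {x. blocksum B k x = z}))
        \<partial>measure_pmf (Ydist B k z))
      \<partial>measure_pmf (map_pmf (blocksum B k) (cond_bern p n S)))"
proof -
  interpret block_partition n k A B
    using cover disjA disjB by unfold_locales
  let ?\<mu> = "unif_block {..<n} S"
  have fin: "finite (set_pmf ?\<mu>)"
    using S by (simp add: set_pmf_unif_block finite_weight_vectors weight_vectors_nonempty)
  have "cmod (\<integral>x. cis (t * f x) \<partial>?\<mu>) ^ 2 ^ k
      \<le> (\<integral>z. cmod (\<integral>x. cis (t * f x) \<partial>cond_pmf ?\<mu> {x. blocksum B k x = z}) ^ 2 ^ k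
          \<partial>map_pmf (blocksum B k) ?\<mu>)"
    using fin by (rule norm_integral_power_two_pow_le_cond_pmf)
  also have "\<dots> \<le> (\<integral>z. (\<integral>Y. cmod (\<integral>x. cis (t * decouple A B k f x Y)
          \<partial>cond_pmf ?\<mu> {x. blocksum B k x = z}) \<partial>Ydist B k z) \<partial>map_pmf (blocksum B k) ?\<mu>)"
    using fin S by (intro integral_mono_pmf_finite cond_char_power_le) auto
  finally show ?thesis
    unfolding cond_bern_eq_unif_block[OF p S] cis_conv_exp .
qed

end
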